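(* For every $\kappa>0$ there exists a constant $C_\kappa$ such that for all $r>0$ and all $\lambda\ge1$, $$\xi_\lambda(\kappa r)\le C_\kappa\,\xi_\lambda(r),\qquad \vartheta_\lambda(\kappa r)\le C_\kappa\,\vartheta_\lambda(r).$$
   Context: For $\lambda\ge1$ define $m_\lambda(t)=\lambda t^{-5/2}$ for $0<t\le1/2$, $m_\lambda(t)=\lambda\chi(t)$ for $1/2<t\le1$, $m_\lambda(t)=\lambda t^{-3/2}$ for $t>1$, where $\chi$ is a $C^1$ decreasing convex function on $[1/2,1]$ chosen so that $m_\lambda$ is a $C^1$ decreasing bijection of $(0,\infty)$ onto itself; and $\mu_\lambda(t)=\lambda t^{-5/2}$ for $0<t\le1/2$, $\mu_\lambda(t)=\lambda\tilde\chi(t)$ for $1/2<t\le1$, $\mu_\lambda(t)=\lambda t^{-1/2}$ for $t>1$, with $\tilde\chi$ a $C^1$ decreasing convex function chosen so that $\mu_\lambda$ is $C^1$ on $(0,\infty)$. Set $\xi_\lambda(r)=-m_\lambda'(m_\lambda^{-1}(r))$ and $\vartheta_\lambda(r)=-\mu_\lambda'(\mu_\lambda^{-1}(r))$ for $r>0$. *)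

theory Defs
  imports "HOL-Analysis.Analysis"
begin

definition mfun :: "(real \<Rightarrow> real) \<Rightarrow> real \<Rightarrow> real \<Rightarrow> real" where
  "mfun chi lam t =
     (if t \<le> 1/2 then lam * t powr (-5/2)
      else if t \<le> 1 then lam * chi t
      else lam * t powr (-3/2))"

definition mufun :: "(real \<Rightarrow> real) \<Rightarrow> real \<Rightarrow> real \<Rightarrow> real" where
  "mufun chi lam t =
     (if t \<le> 1/2 then lam * t powr (-5/2)
      else if t \<le> 1 then lam * chi t
      else lam * t powr (-1/2))"

definition xi :: "(real \<Rightarrow> real) \<Rightarrow> real \<Rightarrow> real \<Rightarrow> real" where
  "xi chi lam r = - deriv (mfun chi lam) (inv_into {0<..} (mfun chi lam) r)"

definition vartheta :: "(real \<Rightarrow> real) \<Rightarrow> real \<Rightarrow> real \<Rightarrow> real" where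
  "vartheta chi lam r = - deriv (mufun chi lam) (inv_into {0<..} (mufun chi lam) r)"

end

theory Submission
  imports Defs
begin

text \<open>
  For \<open>\<lambda> = 1\<close> both profiles are power laws t powr (-5/2) and t powr (-b), with b = 3/2 resp. 1/2,
  glued along [1/2,1]. On the power-law pieces -M' is a constant multiple of w(M), where
  w(s) = min (s powr ((b+1)/b)) (s powr (7/5)); on [1/2,1], M and -M' stay between positive bounds,
  convexity forcing -M' \<ge> b there. So -M' is comparable to w(M) on (0,\<infinity>). Since m_\<lambda> = \<lambda> M,
  evaluating at M^-1(r/\<lambda>) makes \<xi>_\<lambda>(r) comparable to \<lambda> w(r/\<lambda>) uniformly in \<lambda>, and w, a minimum
  of two powers, satisfies w(\<kappa> s) \<le> max (\<kappa> powr p) (\<kappa> powr q) w(s).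
\<close>

lemma isCont_eq_if_eventually_eq:
  fixes f g :: "'a::t2_space \<Rightarrow> 'b::t2_space"
  assumes "isCont f c" "isCont g c" "F \<le> at c" "F \<noteq> bot"
    and "eventually (\<lambda>x. f x = g x) F"
  shows "f c = g c"
proof -
  have f: "(f \<longlongrightarrow> f c) F" and "(g \<longlongrightarrow> g c) F"
    using assms(1-3) by (auto simp: isCont_def intro: tendsto_mono)
  then have "(f \<longlongrightarrow> g c) F"
    using tendsto_cong[OF assms(5)] by simp
  with f show ?thesis
    using tendsto_unique assms(4) by blast
qed

lemma C1_differentiable_on_imp_deriv:
  fixes f :: "real \<Rightarrow> real"
  assumes "f C1_differentiable_on S"
  shows "\<And>x. x \<in> S \<Longrightarrow> (f has_real_derivative deriv f x) (at x)"
    and "continuous_on S (deriv f)"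
proof -
  obtain D where D: "\<And>x. x \<in> S \<Longrightarrow> (f has_real_derivative D x) (at x)"
    and "continuous_on S D"
    using assms unfolding C1_differentiable_on_def has_real_derivative_iff_has_vector_derivative
    by auto
  have deriv_eq: "\<And>x. x \<in> S \<Longrightarrow> deriv f x = D x"
    using D DERIV_imp_deriv by blast
  show "\<And>x. x \<in> S \<Longrightarrow> (f has_real_derivative deriv f x) (at x)"
    using D deriv_eq by simp
  show "continuous_on S (deriv f)"
    using \<open>continuous_on S D\<close> deriv_eq continuous_on_cong by blast
qed

lemma convex_on_cong:
  fixes f g :: "'a::real_vector \<Rightarrow> real"
  assumes "convex_on S f" "\<And>x. x \<in> S \<Longrightarrow> f x = g x"
  shows "convex_on S g"
proof (rule convex_onI)
  show "convex S"
    using assms(1) by (rule convex_on_imp_convex)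
  fix t :: real and x y assume "0 < t" "t < 1" "x \<in> S" "y \<in> S"
  moreover have "(1 - t) *\<^sub>R x + t *\<^sub>R y \<in> S"
    using \<open>convex S\<close> calculation by (simp add: convexD)
  ultimately show "g ((1 - t) *\<^sub>R x + t *\<^sub>R y) \<le> (1 - t) * g x + t * g y"
    using convex_onD[OF assms(1), of t x y] assms(2) by simp
qed

lemma convex_on_deriv_le_slope:
  fixes f :: "real \<Rightarrow> real"
  assumes cvx: "convex_on I f" and "x \<in> I" "y \<in> I" "x < y"
    and "(f has_real_derivative D) (at x)"
  shows "D \<le> (f y - f x) / (y - x)"
proof -
  have "((\<lambda>u. (f u - f x) / (u - x)) \<longlongrightarrow> D) (at_right x)"
    using has_field_derivative_at_within[OF assms(5), of "{x<..}"]
    by (simp add: has_field_derivative_iff)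
  moreover have "eventually (\<lambda>u. (f u - f x) / (u - x) \<le> (f y - f x) / (y - x)) (at_right x)"
    using eventually_at_right_real[OF \<open>x < y\<close>]
  proof (rule eventually_mono)
    fix u assume "u \<in> {x<..<y}"
    then have "(f x - f u) / (x - u) \<le> (f x - f y) / (x - y)"
      using convex_on_slope_le(1)[OF cvx \<open>x \<in> I\<close> \<open>y \<in> I\<close>] by auto
    then show "(f u - f x) / (u - x) \<le> (f y - f x) / (y - x)"
      by (metis minus_diff_eq minus_divide_divide)
  qed
  ultimately show ?thesis
    by (rule tendsto_upperbound) (simp add: trivial_limit_at_right_real)
qed

lemma convex_on_slope_le_deriv:
  fixes f :: "real \<Rightarrow> real"
  assumes cvx: "convex_on I f" and "x \<in> I" "y \<in> I" "x < y"
    and "(f has_real_derivative D) (at y)"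
  shows "(f y - f x) / (y - x) \<le> D"
proof -
  have "((\<lambda>u. (f u - f y) / (u - y)) \<longlongrightarrow> D) (at_left y)"
    using has_field_derivative_at_within[OF assms(5), of "{..<y}"]
    by (simp add: has_field_derivative_iff)
  moreover have "eventually (\<lambda>u. (f y - f x) / (y - x) \<le> (f u - f y) / (u - y)) (at_left y)"
    using eventually_at_left_real[OF \<open>x < y\<close>]
  proof (rule eventually_mono)
    fix u assume "u \<in> {x<..<y}"
    then have "(f x - f y) / (x - y) \<le> (f u - f y) / (u - y)"
      using convex_on_slope_le(2)[OF cvx \<open>x \<in> I\<close> \<open>y \<in> I\<close>] by auto
    then show "(f y - f x) / (y - x) \<le> (f u - f y) / (u - y)"
      by (metis minus_diff_eq minus_divide_divide)
  qed
  ultimately show ?thesis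
    by (rule tendsto_lowerbound) (simp add: trivial_limit_at_left_real)
qed

lemma convex_on_deriv_mono:
  fixes f :: "real \<Rightarrow> real"
  assumes "convex_on I f" "x \<in> I" "y \<in> I" "x < y"
    and "(f has_real_derivative Dx) (at x)" "(f has_real_derivative Dy) (at y)"
  shows "Dx \<le> Dy"
  using convex_on_deriv_le_slope[OF assms(1-5)] convex_on_slope_le_deriv[OF assms(1-4,6)]
  by linarith

definition min_powr :: "real \<Rightarrow> real \<Rightarrow> real \<Rightarrow> real" where
  "min_powr p q s = min (s powr p) (s powr q)"

lemma min_powr_nonneg: "0 \<le> min_powr p q s"
  by (simp add: min_powr_def)

lemma min_mult_le_max_mult_min:
  fixes a1 a2 u v :: real
  assumes "0 \<le> a1" "0 \<le> a2" "0 \<le> u" "0 \<le> v"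
  shows "min (a1 * u) (a2 * v) \<le> max a1 a2 * min u v"
proof (cases "u \<le> v")
  case True
  have "min (a1 * u) (a2 * v) \<le> max a1 a2 * u"
    using assms by (metis min.coboundedI1 max.cobounded1 mult_right_mono)
  with True show ?thesis by simp
next
  case False
  have "min (a1 * u) (a2 * v) \<le> max a1 a2 * v"
    using assms by (metis min.coboundedI2 max.cobounded2 mult_right_mono)
  with False show ?thesis by simp
qed

lemma min_powr_mult_le:
  assumes "0 < \<kappa>" "0 < s"
  shows "min_powr p q (\<kappa> * s) \<le> max (\<kappa> powr p) (\<kappa> powr q) * min_powr p q s"
  unfolding min_powr_def using assms by (simp add: powr_mult min_mult_le_max_mult_min)

definition neg_deriv_at_inv :: "(real \<Rightarrow> real) \<Rightarrow> real \<Rightarrow> real" where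
  "neg_deriv_at_inv f r = - deriv f (inv_into {0<..} f r)"

lemma neg_deriv_at_inv_scaled_bounds:
  fixes M w :: "real \<Rightarrow> real"
  assumes surj: "{0<..} \<subseteq> M ` {0<..}"
    and diff: "\<And>t. 0 < t \<Longrightarrow> M field_differentiable at t"
    and bounds: "\<And>t. 0 < t \<Longrightarrow> A * w (M t) \<le> - deriv M t \<and> - deriv M t \<le> B * w (M t)"
    and "0 < lam" "0 < r"
  shows "lam * A * w (r / lam) \<le> neg_deriv_at_inv (\<lambda>t. lam * M t) r
    \<and> neg_deriv_at_inv (\<lambda>t. lam * M t) r \<le> lam * B * w (r / lam)"
proof -
  have "r / lam \<in> M ` {0<..}"
    using surj \<open>0 < lam\<close> \<open>0 < r\<close> by auto
  then obtain t0 where "0 < t0" "M t0 = r / lam"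
    by auto
  then have r_in: "r \<in> (\<lambda>t. lam * M t) ` {0<..}"
    using \<open>0 < lam\<close> by (intro image_eqI[of _ _ t0]) auto
  define t where "t = inv_into {0<..} (\<lambda>t. lam * M t) r"
  have "0 < t"
    unfolding t_def using inv_into_into[OF r_in] by simp
  have "lam * M t = r"
    unfolding t_def using f_inv_into_f[OF r_in] by simp
  then have "M t = r / lam"
    using \<open>0 < lam\<close> by (simp add: field_simps)
  have "neg_deriv_at_inv (\<lambda>t. lam * M t) r = lam * - deriv M t"
    unfolding neg_deriv_at_inv_def t_def[symmetric] using diff \<open>0 < t\<close> by (simp add: deriv_cmult)
  moreover have "lam * (A * w (r / lam)) \<le> lam * - deriv M t \<and> lam * - deriv M t \<le> lam * (B * w (r / lam))"
    using bounds[OF \<open>0 < t\<close>] \<open>M t = r / lam\<close> \<open>0 < lam\<close> by (intro conjI mult_left_mono) auto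
  ultimately show ?thesis
    by (simp only: mult.assoc)
qed

lemma doubling_of_comparable:
  fixes X G :: "real \<Rightarrow> real"
  assumes comp: "\<And>r. 0 < r \<Longrightarrow> a * G r \<le> X r \<and> X r \<le> c * G r"
    and doubling: "\<And>r. 0 < r \<Longrightarrow> G (\<kappa> * r) \<le> K * G r"
    and "0 < a" "0 \<le> c" "0 \<le> K" "0 < \<kappa>" "0 < r"
  shows "X (\<kappa> * r) \<le> (c * K / a) * X r"
proof -
  have "X (\<kappa> * r) \<le> c * G (\<kappa> * r)"
    using comp[of "\<kappa> * r"] assms by simp
  also have "\<dots> \<le> c * (K * G r)"
    using doubling \<open>0 \<le> c\<close> \<open>0 < r\<close> by (simp add: mult_left_mono)
  also have "\<dots> = (c * K / a) * (a * G r)"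
    using \<open>0 < a\<close> by simp
  also have "\<dots> \<le> (c * K / a) * X r"
    using comp[OF \<open>0 < r\<close>] assms by (intro mult_left_mono) auto
  finally show ?thesis .
qed

definition glued_power :: "(real \<Rightarrow> real) \<Rightarrow> real \<Rightarrow> real \<Rightarrow> real" where
  "glued_power chi b t =
     (if t \<le> 1/2 then t powr (-5/2) else if t \<le> 1 then chi t else t powr (-b))"

locale glued_profile =
  fixes chi :: "real \<Rightarrow> real" and b :: real
  assumes b_pos: "0 < b" and b_le: "b \<le> 5/2"
    and chi_convex: "convex_on {1/2..1} chi"
    and chi_antimono: "antimono_on {1/2..1} chi"
    and C1: "glued_power chi b C1_differentiable_on {0<..}"
begin

abbreviation M :: "real \<Rightarrow> real" where
  "M \<equiv> glued_power chi b"

abbreviation weight :: "real \<Rightarrow> real" where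
  "weight \<equiv> min_powr ((b + 1) / b) (7/5)"

lemma has_real_derivative_M: "0 < t \<Longrightarrow> (M has_real_derivative deriv M t) (at t)"
  using C1_differentiable_on_imp_deriv(1)[OF C1] by simp

lemma isCont_deriv_M: "0 < t \<Longrightarrow> isCont (deriv M) t"
  using C1_differentiable_on_imp_deriv(2)[OF C1]
  by (simp add: continuous_on_eq_continuous_at)

lemma isCont_M: "0 < t \<Longrightarrow> isCont M t"
  using has_real_derivative_M DERIV_isCont by blast

lemma deriv_lower:
  assumes "0 < t" "t \<le> 1/2"
  shows "deriv M t = -(5/2) * t powr (-7/2)"
proof -
  have strict: "deriv M s = -(5/2) * s powr (-7/2)" if "0 < s" "s < 1/2" for s
  proof -
    have "((\<lambda>x. x powr (-5/2)) has_real_derivative deriv M s) (at s)"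
      by (rule has_field_derivative_transform_within_open[OF has_real_derivative_M, of s "{0<..<1/2}"])
        (use that in \<open>auto simp: glued_power_def\<close>)
    moreover have "((\<lambda>x. x powr (-5/2)) has_real_derivative (-5/2) * s powr (-5/2 - 1)) (at s)"
      by (rule has_real_derivative_powr) (use that in auto)
    ultimately show ?thesis
      using DERIV_unique by fastforce
  qed
  show ?thesis
  proof (cases "t < 1/2")
    case True
    with strict assms show ?thesis by simp
  next
    case False
    with assms have "t = 1/2" by simp
    have "deriv M (1/2) = -(5/2) * (1/2) powr (-7/2)"
    proof (rule isCont_eq_if_eventually_eq[where f = "deriv M" and c = "1/2"
          and g = "\<lambda>s. -(5/2) * s powr (-7/2)" and F = "at_left (1/2)"])
      show "isCont (deriv M) (1/2)"
        by (rule isCont_deriv_M) simp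
      show "isCont (\<lambda>s. -(5/2) * s powr (-7/2)) (1/2 :: real)"
        by (intro continuous_intros) auto
      show "\<forall>\<^sub>F s in at_left (1/2). deriv M s = -(5/2) * s powr (-7/2)"
        by (rule eventually_mono[OF eventually_at_left_real[of 0]]) (auto simp: strict)
    qed (auto simp: at_le trivial_limit_at_left_real)
    then show ?thesis
      unfolding \<open>t = 1/2\<close> .
  qed
qed

lemma upper_piece:
  assumes "1 \<le> t"
  shows "M t = t powr (-b)"
proof (cases "1 < t")
  case True
  then show ?thesis by (simp add: glued_power_def)
next
  case False
  have "M 1 = 1 powr (-b)"
  proof (rule isCont_eq_if_eventually_eq[where f = M and c = 1
        and g = "\<lambda>s. s powr (-b)" and F = "at_right 1"])
    show "isCont M 1"
      by (rule isCont_M) simp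
    show "isCont (\<lambda>s. s powr (-b)) (1 :: real)"
      by (intro continuous_intros) auto
    show "\<forall>\<^sub>F s in at_right 1. M s = s powr (-b)"
      by (rule eventually_mono[OF eventually_at_right_real[of 1 2]]) (auto simp: glued_power_def)
  qed (auto simp: at_le trivial_limit_at_right_real)
  with False assms show ?thesis by simp
qed

lemma deriv_upper:
  assumes "1 \<le> t"
  shows "deriv M t = -b * t powr (-b - 1)"
proof -
  have strict: "deriv M s = -b * s powr (-b - 1)" if "1 < s" for s
  proof -
    have "((\<lambda>x. x powr (-b)) has_real_derivative deriv M s) (at s)"
      by (rule has_field_derivative_transform_within_open[OF has_real_derivative_M, of s "{1<..}"])
        (use that in \<open>auto simp: glued_power_def\<close>)
    moreover have "((\<lambda>x. x powr (-b)) has_real_derivative (-b) * s powr (-b - 1)) (at s)"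
      by (rule has_real_derivative_powr) (use that in auto)
    ultimately show ?thesis
      using DERIV_unique by fastforce
  qed
  show ?thesis
  proof (cases "1 < t")
    case True
    with strict show ?thesis by simp
  next
    case False
    have "deriv M 1 = -b * 1 powr (-b - 1)"
    proof (rule isCont_eq_if_eventually_eq[where f = "deriv M" and c = 1
          and g = "\<lambda>s. -b * s powr (-b - 1)" and F = "at_right 1"])
      show "isCont (deriv M) 1"
        by (rule isCont_deriv_M) simp
      show "isCont (\<lambda>s. -b * s powr (-b - 1)) (1 :: real)"
        by (intro continuous_intros) auto
      show "\<forall>\<^sub>F s in at_right 1. deriv M s = -b * s powr (-b - 1)"
        by (rule eventually_mono[OF eventually_at_right_real[of 1 2]]) (auto simp: strict)
    qed (auto simp: at_le trivial_limit_at_right_real)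
    with False assms show ?thesis by simp
  qed
qed

lemma deriv_middle_le:
  assumes "1/2 < t" "t \<le> 1"
  shows "deriv M t \<le> -b"
proof (cases "t = 1")
  case True
  then show ?thesis using deriv_upper[of 1] by simp
next
  case False
  have "convex_on {1/2<..1} M"
    by (rule convex_on_cong[OF convex_on_subset[OF chi_convex]]) (auto simp: glued_power_def)
  then have "deriv M t \<le> deriv M 1"
    by (rule convex_on_deriv_mono[of _ M t 1]) (use assms False in \<open>auto intro: has_real_derivative_M\<close>)
  then show ?thesis using deriv_upper[of 1] by simp
qed

lemma middle_ge_one:
  assumes "1/2 < t" "t \<le> 1"
  shows "1 \<le> M t"
proof -
  have "chi 1 \<le> chi t"
    using chi_antimono assms unfolding monotone_on_def by auto
  moreover have "chi 1 = 1"
    using upper_piece[of 1] by (simp add: glued_power_def)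
  ultimately show ?thesis
    using assms by (simp add: glued_power_def)
qed

lemma surj: "{0<..} \<subseteq> M ` {0<..}"
proof
  fix s :: real assume "s \<in> {0<..}"
  then have "0 < s" by simp
  consider "s < 1" | "1 \<le> s" "s \<le> 2 powr (5/2)" | "2 powr (5/2) < s"
    by linarith
  then show "s \<in> M ` {0<..}"
  proof cases
    case 1
    define t where "t = s powr (-1/b)"
    have "s powr (1/b) < 1"
      using \<open>0 < s\<close> 1 b_pos powr_less_mono2[of "1/b" s 1] by simp
    then have "1 < t"
      unfolding t_def using \<open>0 < s\<close> by (simp add: powr_minus one_less_inverse)
    moreover have "M t = s"
      using upper_piece[of t] \<open>1 < t\<close> \<open>0 < s\<close> b_pos by (simp add: t_def powr_powr)
    ultimately show ?thesis
      by (intro image_eqI[of _ _ t]) auto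
  next
    case 2
    have "M (1/2) = 2 powr (5/2)"
      by (simp add: glued_power_def powr_minus powr_divide)
    moreover have "M 1 = 1"
      using upper_piece[of 1] by simp
    moreover have "continuous_on {1/2..1} M"
      by (intro continuous_at_imp_continuous_on ballI isCont_M) auto
    ultimately obtain t where "1/2 \<le> t" "t \<le> 1" "M t = s"
      using IVT2'[of M 1 s "1/2"] 2 by auto
    then show ?thesis
      by (intro image_eqI[of _ _ t]) auto
  next
    case 3
    define t where "t = s powr (-2/5)"
    have "(2 powr (5/2)) powr (2/5) < s powr (2/5)"
      using 3 by (intro powr_less_mono2) auto
    then have "2 < s powr (2/5)"
      by (simp add: powr_powr)
    then have "t < 1/2"
      unfolding t_def using \<open>0 < s\<close> by (simp add: powr_minus divide_simps)
    moreover have "M t = s"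
      using \<open>t < 1/2\<close> \<open>0 < s\<close> by (simp add: glued_power_def t_def powr_powr)
    moreover have "0 < t"
      unfolding t_def using \<open>0 < s\<close> by simp
    ultimately show ?thesis
      by (intro image_eqI[of _ _ t]) auto
  qed
qed

lemma weight_ge_one:
  assumes "1 \<le> s"
  shows "weight s = s powr (7/5)"
proof -
  have "7/5 \<le> (b + 1) / b"
    using b_pos b_le by (simp add: field_simps)
  then show ?thesis
    unfolding min_powr_def using powr_mono[of "7/5" "(b + 1) / b" s] assms by (simp add: min_def)
qed

lemma weight_le_one:
  assumes "0 < s" "s \<le> 1"
  shows "weight s = s powr ((b + 1) / b)"
proof -
  have "7/5 \<le> (b + 1) / b"
    using b_pos b_le by (simp add: field_simps)
  then show ?thesis
    unfolding min_powr_def using powr_mono'[of "7/5" "(b + 1) / b" s] assms by (simp add: min_def)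
qed

lemma neg_deriv_lower:
  assumes "0 < t" "t \<le> 1/2"
  shows "- deriv M t = 5/2 * weight (M t)"
proof -
  have "M t = t powr (-5/2)"
    using assms by (simp add: glued_power_def)
  moreover have "1 \<le> t powr (-5/2)"
    using assms powr_le1[of "5/2" t] by (simp add: powr_minus one_le_inverse)
  ultimately have "weight (M t) = t powr (-7/2)"
    by (simp add: weight_ge_one powr_powr)
  then show ?thesis
    using deriv_lower[OF assms] by simp
qed

lemma neg_deriv_upper:
  assumes "1 \<le> t"
  shows "- deriv M t = b * weight (M t)"
proof -
  have "t powr (-b) \<le> 1"
    using assms b_pos ge_one_powr_ge_zero[of t b] by (simp add: powr_minus inverse_le_1_iff)
  moreover have "- (b * ((b + 1) / b)) = -b - 1"
    using b_pos by (simp add: field_simps)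
  ultimately have "weight (M t) = t powr (-b - 1)"
    using assms by (simp add: upper_piece weight_le_one powr_powr)
  then show ?thesis
    using deriv_upper[OF assms] by simp
qed

lemma neg_deriv_middle_comparable:
  obtains A B where "0 < A" "0 < B"
    and "\<And>t. 1/2 < t \<Longrightarrow> t \<le> 1 \<Longrightarrow>
      A * weight (M t) \<le> - deriv M t \<and> - deriv M t \<le> B * weight (M t)"
proof -
  have "continuous_on {1/2..1} (deriv M)" "continuous_on {1/2..1} M"
    by (intro continuous_at_imp_continuous_on ballI isCont_deriv_M isCont_M; simp)+
  then have "bounded (deriv M ` {1/2..1})" "bounded (M ` {1/2..1})"
    by (auto intro: compact_imp_bounded compact_continuous_image)
  then obtain H S where H: "\<And>t. t \<in> {1/2..1} \<Longrightarrow> \<bar>deriv M t\<bar> \<le> H"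
    and S: "\<And>t. t \<in> {1/2..1} \<Longrightarrow> \<bar>M t\<bar> \<le> S"
    unfolding bounded_real by blast
  define K where "K = max 1 (S powr (7/5))"
  have "1 \<le> K"
    by (simp add: K_def)
  have "b / K * weight (M t) \<le> - deriv M t \<and> - deriv M t \<le> max 1 H * weight (M t)"
    if "1/2 < t" "t \<le> 1" for t
  proof
    have "1 \<le> M t" "M t \<le> S"
      using middle_ge_one[OF that] S[of t] that by auto
    then have "weight (M t) \<le> K" "1 \<le> weight (M t)"
      using powr_mono2[of "7/5" "M t" S] by (auto simp: weight_ge_one K_def ge_one_powr_ge_zero)
    have "b / K * weight (M t) \<le> b / K * K"
      using \<open>weight (M t) \<le> K\<close> \<open>1 \<le> K\<close> b_pos by (intro mult_left_mono) auto
    also have "\<dots> = b"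
      using \<open>1 \<le> K\<close> by simp
    also have "\<dots> \<le> - deriv M t"
      using deriv_middle_le[OF that] by simp
    finally show "b / K * weight (M t) \<le> - deriv M t" .
    have "- deriv M t \<le> max 1 H"
      using H[of t] that by auto
    also have "\<dots> \<le> max 1 H * weight (M t)"
      using \<open>1 \<le> weight (M t)\<close> by (simp add: mult_le_cancel_left1)
    finally show "- deriv M t \<le> max 1 H * weight (M t)" .
  qed
  moreover have "0 < b / K" "0 < max 1 H"
    using b_pos \<open>1 \<le> K\<close> by auto
  ultimately show ?thesis
    using that by blast
qed

lemma deriv_comparable:
  obtains A B where "0 < A" "0 < B"
    and "\<And>t. 0 < t \<Longrightarrow> A * weight (M t) \<le> - deriv M t \<and> - deriv M t \<le> B * weight (M t)"
proof -
  obtain A0 B0 where "0 < A0" "0 < B0"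
    and middle: "\<And>t. 1/2 < t \<Longrightarrow> t \<le> 1 \<Longrightarrow>
      A0 * weight (M t) \<le> - deriv M t \<and> - deriv M t \<le> B0 * weight (M t)"
    using neg_deriv_middle_comparable by blast
  define A where "A = min A0 (min (5/2) b)"
  define B where "B = max B0 (max (5/2) b)"
  have sandwich: "A * w \<le> c * w \<and> c * w \<le> B * w" if "A \<le> c" "c \<le> B" "0 \<le> w" for c w
    using that by (simp add: mult_right_mono)
  have bounds: "A * weight (M t) \<le> - deriv M t \<and> - deriv M t \<le> B * weight (M t)" if "0 < t" for t
  proof -
    consider "t \<le> 1/2" | "1/2 < t" "t \<le> 1" | "1 \<le> t"
      by linarith
    then show ?thesis
    proof cases
      case 1
      show ?thesis
        unfolding neg_deriv_lower[OF \<open>0 < t\<close> 1]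
        by (rule sandwich) (auto simp: A_def B_def min_powr_nonneg)
    next
      case 2
      have "A * weight (M t) \<le> A0 * weight (M t)" "B0 * weight (M t) \<le> B * weight (M t)"
        by (auto simp: A_def B_def min_powr_nonneg intro!: mult_right_mono)
      with middle[OF 2] show ?thesis
        by linarith
    next
      case 3
      show ?thesis
        unfolding neg_deriv_upper[OF 3]
        by (rule sandwich) (auto simp: A_def B_def min_powr_nonneg)
    qed
  qed
  moreover have "0 < A" "0 < B"
    using \<open>0 < A0\<close> \<open>0 < B0\<close> b_pos by (auto simp: A_def B_def)
  ultimately show ?thesis
    using that by blast
qed

lemma neg_deriv_at_inv_comparable:
  obtains A B where "0 < A" "0 < B"
    and "\<And>lam r. 0 < lam \<Longrightarrow> 0 < r \<Longrightarrow>
      lam * A * weight (r / lam) \<le> neg_deriv_at_inv (\<lambda>t. lam * M t) r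
      \<and> neg_deriv_at_inv (\<lambda>t. lam * M t) r \<le> lam * B * weight (r / lam)"
proof -
  obtain A B where "0 < A" "0 < B"
    and bounds: "\<And>t. 0 < t \<Longrightarrow> A * weight (M t) \<le> - deriv M t \<and> - deriv M t \<le> B * weight (M t)"
    using deriv_comparable by blast
  have diff: "\<And>t. 0 < t \<Longrightarrow> M field_differentiable at t"
    using has_real_derivative_M field_differentiable_def by blast
  show ?thesis
    using neg_deriv_at_inv_scaled_bounds[OF surj diff bounds] by (rule that[OF \<open>0 < A\<close> \<open>0 < B\<close>])
qed

lemma neg_deriv_at_inv_nonneg:
  assumes "0 < lam" "0 < r"
  shows "0 \<le> neg_deriv_at_inv (\<lambda>t. lam * M t) r"
proof -
  obtain A B where "0 < A" "0 < B"
    and comp: "\<And>lam r. 0 < lam \<Longrightarrow> 0 < r \<Longrightarrow>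
      lam * A * weight (r / lam) \<le> neg_deriv_at_inv (\<lambda>t. lam * M t) r
      \<and> neg_deriv_at_inv (\<lambda>t. lam * M t) r \<le> lam * B * weight (r / lam)"
    using neg_deriv_at_inv_comparable by blast
  have "lam * A * weight (r / lam) \<le> neg_deriv_at_inv (\<lambda>t. lam * M t) r"
    using comp[OF assms] by simp
  moreover have "0 \<le> lam * A * weight (r / lam)"
    using assms \<open>0 < A\<close> min_powr_nonneg by simp
  ultimately show ?thesis
    by linarith
qed

lemma neg_deriv_at_inv_doubling:
  assumes "0 < \<kappa>"
  obtains C where "\<And>C' lam r. C \<le> C' \<Longrightarrow> 0 < lam \<Longrightarrow> 0 < r \<Longrightarrow>
    neg_deriv_at_inv (\<lambda>t. lam * M t) (\<kappa> * r) \<le> C' * neg_deriv_at_inv (\<lambda>t. lam * M t) r"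
proof -
  obtain A B where "0 < A" "0 < B"
    and comp: "\<And>lam r. 0 < lam \<Longrightarrow> 0 < r \<Longrightarrow>
      lam * A * weight (r / lam) \<le> neg_deriv_at_inv (\<lambda>t. lam * M t) r
      \<and> neg_deriv_at_inv (\<lambda>t. lam * M t) r \<le> lam * B * weight (r / lam)"
    using neg_deriv_at_inv_comparable by blast
  define K where "K = max (\<kappa> powr ((b + 1) / b)) (\<kappa> powr (7/5))"
  have "0 \<le> K"
    by (simp add: K_def le_max_iff_disj)
  have doubling: "neg_deriv_at_inv (\<lambda>t. lam * M t) (\<kappa> * r)
      \<le> (B * K / A) * neg_deriv_at_inv (\<lambda>t. lam * M t) r" if "0 < lam" "0 < r" for lam r
  proof -
    have comp_lam: "A * (lam * weight (s / lam)) \<le> neg_deriv_at_inv (\<lambda>t. lam * M t) s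
      \<and> neg_deriv_at_inv (\<lambda>t. lam * M t) s \<le> B * (lam * weight (s / lam))" if "0 < s" for s
      using comp[OF \<open>0 < lam\<close> \<open>0 < s\<close>] by (simp add: ac_simps)
    have weight_lam: "lam * weight (\<kappa> * s / lam) \<le> K * (lam * weight (s / lam))" if "0 < s" for s
    proof -
      have "weight (\<kappa> * (s / lam)) \<le> K * weight (s / lam)"
        unfolding K_def using \<open>0 < s\<close> \<open>0 < lam\<close> assms by (intro min_powr_mult_le) auto
      then have "lam * weight (\<kappa> * (s / lam)) \<le> lam * (K * weight (s / lam))"
        using \<open>0 < lam\<close> by (intro mult_left_mono) auto
      then show ?thesis
        by (simp add: mult.left_commute)
    qed
    show ?thesis
      using doubling_of_comparable[where X = "neg_deriv_at_inv (\<lambda>t. lam * M t)"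
          and G = "\<lambda>s. lam * weight (s / lam)",
          OF comp_lam weight_lam \<open>0 < A\<close> less_imp_le[OF \<open>0 < B\<close>] \<open>0 \<le> K\<close> assms \<open>0 < r\<close>] .
  qed
  have "neg_deriv_at_inv (\<lambda>t. lam * M t) (\<kappa> * r) \<le> C * neg_deriv_at_inv (\<lambda>t. lam * M t) r"
    if "B * K / A \<le> C" "0 < lam" "0 < r" for C lam r
    using doubling[OF that(2,3)] neg_deriv_at_inv_nonneg[OF that(2,3)] mult_right_mono[OF that(1)]
    by (meson order_trans)
  then show ?thesis
    by (rule that)
qed

end

lemma mfun_eq_glued_power: "mfun chi lam = (\<lambda>t. lam * glued_power chi (3/2) t)"
  by (simp add: fun_eq_iff mfun_def glued_power_def)

lemma mufun_eq_glued_power: "mufun chi lam = (\<lambda>t. lam * glued_power chi (1/2) t)"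
  by (simp add: fun_eq_iff mufun_def glued_power_def)

theorem lemmaB1:
  fixes chi chit :: "real \<Rightarrow> real"
  assumes chi_convex: "convex_on {1/2..1} chi"
    and chi_decr: "antimono_on {1/2..1} chi"
    and m_C1: "\<And>lam. lam \<ge> 1 \<Longrightarrow> mfun chi lam C1_differentiable_on {0<..}"
    and m_decr: "\<And>lam. lam \<ge> 1 \<Longrightarrow> antimono_on {0<..} (mfun chi lam)"
    and m_bij: "\<And>lam. lam \<ge> 1 \<Longrightarrow> bij_betw (mfun chi lam) {0<..} {0<..}"
    and chit_convex: "convex_on {1/2..1} chit"
    and chit_decr: "antimono_on {1/2..1} chit"
    and mu_C1: "\<And>lam. lam \<ge> 1 \<Longrightarrow> mufun chit lam C1_differentiable_on {0<..}"
  shows "\<forall>\<kappa>>0. \<exists>C. \<forall>r>0. \<forall>lam\<ge>1.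
           xi chi lam (\<kappa> * r) \<le> C * xi chi lam r \<and>
           vartheta chit lam (\<kappa> * r) \<le> C * vartheta chit lam r"
proof (intro allI impI)
  fix \<kappa> :: real assume "0 < \<kappa>"
  interpret m: glued_profile chi "3/2"
    using chi_convex chi_decr m_C1[of 1] by unfold_locales (simp_all add: mfun_eq_glued_power)
  interpret mu: glued_profile chit "1/2"
    using chit_convex chit_decr mu_C1[of 1] by unfold_locales (simp_all add: mufun_eq_glued_power)
  have xi: "xi chi lam r = neg_deriv_at_inv (\<lambda>t. lam * glued_power chi (3/2) t) r" for lam r
    by (simp add: xi_def neg_deriv_at_inv_def mfun_eq_glued_power)
  have vartheta: "vartheta chit lam r = neg_deriv_at_inv (\<lambda>t. lam * glued_power chit (1/2) t) r" for lam r
    by (simp add: vartheta_def neg_deriv_at_inv_def mufun_eq_glued_power)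
  obtain C1 where C1: "\<And>C lam r. C1 \<le> C \<Longrightarrow> 0 < lam \<Longrightarrow> 0 < r \<Longrightarrow>
      xi chi lam (\<kappa> * r) \<le> C * xi chi lam r"
    using m.neg_deriv_at_inv_doubling[OF \<open>0 < \<kappa>\<close>] unfolding xi by blast
  obtain C2 where C2: "\<And>C lam r. C2 \<le> C \<Longrightarrow> 0 < lam \<Longrightarrow> 0 < r \<Longrightarrow>
      vartheta chit lam (\<kappa> * r) \<le> C * vartheta chit lam r"
    using mu.neg_deriv_at_inv_doubling[OF \<open>0 < \<kappa>\<close>] unfolding vartheta by blast
  show "\<exists>C. \<forall>r>0. \<forall>lam\<ge>1. xi chi lam (\<kappa> * r) \<le> C * xi chi lam r \<and>
      vartheta chit lam (\<kappa> * r) \<le> C * vartheta chit lam r"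
    using C1[of "max C1 C2"] C2[of "max C1 C2"] by (intro exI[of _ "max C1 C2"]) auto
qed

end
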